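(* The (unital) $G$-graded ring $S$ is epsilon-strongly graded if and only if $S$ is nearly epsilon-strongly graded and $S_g$ is a finitely generated left $R$-module for every $g\in G$.
   Context: $G$ is a group with identity $e$; $S=\bigoplus_{g\in G}S_g$ is an associative unital ring graded by $G$ ($S_gS_h\subseteq S_{gh}$), $R=S_e$, and $XY$ denotes finite sums of products. For a ring $A$, a left $A$-module $M$ is s-unital if for each $m\in M$ there is $a\in A$ with $am=m$ (right analogously); an $(A,B)$-bimodule is s-unital if left s-unital over $A$ and right s-unital over $B$. $S$ is nearly epsilon-strongly graded if each $S_g$ is an s-unital $(S_gS_{g^{-1}},S_{g^{-1}}S_g)$-bimodule. $S$ is epsilon-strongly graded if each $S_g$ is a unital $(S_gS_{g^{-1}},S_{g^{-1}}S_g)$-bimodule, i.e. $S_gS_{g^{-1}}$ has an identity $\epsilon_g$ with $\epsilon_gs=s=s\epsilon_{g^{-1}}$ for $s\in S_g$. *)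

theory Defs
  imports Main
begin

text \<open>The group G is written additively (class group_add, not necessarily
commutative): identity 0, inverse uminus, product +.  The ring S is the whole
type 'a (a unital ring), with homogeneous components Sg g.\<close>

definition prods :: "'a::ring_1 set \<Rightarrow> 'a set \<Rightarrow> 'a set" where
  "prods X Y = {sum_list (map (\<lambda>(x, y). x * y) ps) | ps. set ps \<subseteq> X \<times> Y}"

definition additive_subgroup :: "'a::ring_1 set \<Rightarrow> bool" where
  "additive_subgroup A \<longleftrightarrow> 0 \<in> A \<and> (\<forall>x\<in>A. \<forall>y\<in>A. x + y \<in> A \<and> - x \<in> A)"

definition group_graded :: "('g::group_add \<Rightarrow> 'a::ring_1 set) \<Rightarrow> bool" where
  "group_graded Sg \<longleftrightarrow>
     (\<forall>g. additive_subgroup (Sg g)) \<and>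
     (\<forall>g h. \<forall>x\<in>Sg g. \<forall>y\<in>Sg h. x * y \<in> Sg (g + h)) \<and>
     (\<forall>s::'a. \<exists>F f. finite F \<and> (\<forall>g\<in>F. f g \<in> Sg g) \<and> s = (\<Sum>g\<in>F. f g)) \<and>
     (\<forall>F f. finite F \<longrightarrow> (\<forall>g\<in>F. f g \<in> Sg g) \<longrightarrow> (\<Sum>g\<in>F. f g) = 0
        \<longrightarrow> (\<forall>g\<in>F. f g = 0))"

definition nearly_epsilon_strongly_graded :: "('g::group_add \<Rightarrow> 'a::ring_1 set) \<Rightarrow> bool" where
  "nearly_epsilon_strongly_graded Sg \<longleftrightarrow>
     (\<forall>g. \<forall>s\<in>Sg g. (\<exists>a\<in>prods (Sg g) (Sg (- g)). a * s = s)
                 \<and> (\<exists>b\<in>prods (Sg (- g)) (Sg g). s * b = s))"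

definition epsilon_strongly_graded :: "('g::group_add \<Rightarrow> 'a::ring_1 set) \<Rightarrow> bool" where
  "epsilon_strongly_graded Sg \<longleftrightarrow>
     (\<forall>g. (\<exists>e\<in>prods (Sg g) (Sg (- g)).
              (\<forall>x\<in>prods (Sg g) (Sg (- g)). e * x = x \<and> x * e = x) \<and>
              (\<forall>s\<in>Sg g. e * s = s))
        \<and> (\<exists>e\<in>prods (Sg (- g)) (Sg g).
              (\<forall>x\<in>prods (Sg (- g)) (Sg g). e * x = x \<and> x * e = x) \<and>
              (\<forall>s\<in>Sg g. s * e = s)))"

definition fin_gen_left_module :: "'a::ring_1 set \<Rightarrow> 'a set \<Rightarrow> bool" where
  "fin_gen_left_module R M \<longleftrightarrow>
     (\<exists>F. finite F \<and> F \<subseteq> M \<and>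
        (\<forall>s\<in>M. \<exists>r. (\<forall>x\<in>F. r x \<in> R) \<and> s = (\<Sum>x\<in>F. r x * x)))"

end

theory Submission
  imports Defs
begin

text \<open>If \<open>S\<^bsub>g\<^esub>\<close> is generated over \<open>S\<^bsub>e\<^esub>\<close> by finitely many elements, s-unitality yields
one element of \<open>S\<^bsub>g\<inverse>\<^esub>S\<^bsub>g\<^esub>\<close> that is a right unit for all the generators, hence for all
of \<open>S\<^bsub>g\<^esub>\<close>. A right unit \<open>f \<in> S\<^bsub>g\<^esub>S\<^bsub>g\<inverse>\<^esub>\<close> of \<open>S\<^bsub>g\<inverse>\<^esub>\<close> is then also a left unit
of \<open>S\<^bsub>g\<^esub>\<close>: a common left unit \<open>a \<in> S\<^bsub>g\<^esub>S\<^bsub>g\<inverse>\<^esub>\<close> of \<open>s\<close> and of the left factors of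
\<open>f\<close> satisfies \<open>a = af = f\<close>. Conversely, if \<open>\<epsilon>\<^bsub>g\<inverse>\<^esub> = \<Sum> x\<^sub>iy\<^sub>i\<close> then
\<open>s = s\<epsilon>\<^bsub>g\<inverse>\<^esub> = \<Sum> (sx\<^sub>i)y\<^sub>i\<close> with \<open>sx\<^sub>i \<in> S\<^bsub>e\<^esub>\<close>, so the \<open>y\<^sub>i\<close> generate \<open>S\<^bsub>g\<^esub>\<close>.\<close>

lemma additive_subgroupD:
  assumes "additive_subgroup A"
  shows additive_subgroup_zero: "0 \<in> A"
    and additive_subgroup_add: "x \<in> A \<Longrightarrow> y \<in> A \<Longrightarrow> x + y \<in> A"
    and additive_subgroup_uminus: "x \<in> A \<Longrightarrow> - x \<in> A"
    and additive_subgroup_diff: "x \<in> A \<Longrightarrow> y \<in> A \<Longrightarrow> x - y \<in> A"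
  using assms unfolding additive_subgroup_def diff_conv_add_uminus by blast+

lemma prods_induct [consumes 1, case_names zero add_product]:
  assumes "p \<in> prods X Y" "P 0"
    and "\<And>x y q. x \<in> X \<Longrightarrow> y \<in> Y \<Longrightarrow> P q \<Longrightarrow> P (x * y + q)"
  shows "P p"
proof -
  obtain ps where p: "p = sum_list (map (\<lambda>(x, y). x * y) ps)" and ps: "set ps \<subseteq> X \<times> Y"
    using assms(1) unfolding prods_def by blast
  from ps have "P (sum_list (map (\<lambda>(x, y). x * y) ps))"
    by (induction ps) (auto intro: assms(2,3))
  then show ?thesis
    using p by simp
qed

lemma prods_zero: "0 \<in> prods X Y"
  unfolding prods_def by (rule CollectI, rule exI[of _ "[]"]) simp

lemma prods_add_product:
  assumes "x \<in> X" "y \<in> Y" "q \<in> prods X Y"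
  shows "x * y + q \<in> prods X Y"
proof -
  obtain ps where "q = sum_list (map (\<lambda>(x, y). x * y) ps)" "set ps \<subseteq> X \<times> Y"
    using assms(3) unfolding prods_def by blast
  then have "x * y + q = sum_list (map (\<lambda>(x, y). x * y) ((x, y) # ps))"
    "set ((x, y) # ps) \<subseteq> X \<times> Y"
    using assms(1,2) by auto
  then show ?thesis
    unfolding prods_def by (intro CollectI exI conjI)
qed

lemma prods_add: "p \<in> prods X Y \<Longrightarrow> q \<in> prods X Y \<Longrightarrow> p + q \<in> prods X Y"
  by (induction p rule: prods_induct) (auto simp: add.assoc intro: prods_add_product)

lemma prods_mono: "p \<in> prods X Y \<Longrightarrow> X \<subseteq> X' \<Longrightarrow> Y \<subseteq> Y' \<Longrightarrow> p \<in> prods X' Y'"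
  by (induction p rule: prods_induct) (auto intro: prods_zero prods_add_product)

lemma prods_mult_left:
  assumes "\<And>x. x \<in> X \<Longrightarrow> c * x \<in> X'"
  shows "p \<in> prods X Y \<Longrightarrow> c * p \<in> prods X' Y"
proof (induction p rule: prods_induct)
  case zero
  then show ?case by (simp add: prods_zero)
next
  case (add_product x y q)
  then show ?case
    using assms prods_add_product[of "c * x" X' y Y "c * q"] by (simp add: algebra_simps)
qed

lemma prods_additive_subgroup:
  assumes "additive_subgroup X"
  shows "additive_subgroup (prods X Y)"
proof -
  have "- p \<in> prods X Y" if "p \<in> prods X Y" for p
    using prods_mult_left[of X "- 1" X p Y] that additive_subgroup_uminus[OF assms] by simp
  then show ?thesis
    unfolding additive_subgroup_def by (auto intro: prods_zero prods_add)
qed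

lemma prods_right_unit:
  assumes "\<And>y. y \<in> Y \<Longrightarrow> y * e = y"
  shows "p \<in> prods X Y \<Longrightarrow> p * e = p"
  by (induction p rule: prods_induct) (simp_all add: assms distrib_right mult.assoc)

lemma prods_left_unit:
  assumes "\<And>x. x \<in> X \<Longrightarrow> e * x = x"
  shows "p \<in> prods X Y \<Longrightarrow> e * p = p"
  by (induction p rule: prods_induct) (simp_all add: assms distrib_left mult.assoc[symmetric])

lemma prods_eq_if_units:
  assumes "a \<in> prods X Y" "e \<in> prods X' Y'"
    and "\<And>y. y \<in> Y \<Longrightarrow> y * e = y" "\<And>x. x \<in> X' \<Longrightarrow> a * x = x"
  shows "a = e"
  using prods_right_unit[of Y e a X] prods_left_unit[of X' a e Y'] assms by simp

lemma prods_finite_support: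
  assumes "p \<in> prods X Y"
  obtains X' Y' where "finite X'" "X' \<subseteq> X" "finite Y'" "Y' \<subseteq> Y" "p \<in> prods X' Y'"
proof -
  have "\<exists>X' Y'. finite X' \<and> X' \<subseteq> X \<and> finite Y' \<and> Y' \<subseteq> Y \<and> p \<in> prods X' Y'"
    using assms
  proof (induction p rule: prods_induct)
    case zero
    then show ?case using prods_zero by blast
  next
    case (add_product x y q)
    then obtain X' Y' where "finite X'" "X' \<subseteq> X" "finite Y'" "Y' \<subseteq> Y" "q \<in> prods X' Y'"
      by blast
    moreover have "x * y + q \<in> prods (insert x X') (insert y Y')"
      using prods_mono[OF \<open>q \<in> prods X' Y'\<close>, of "insert x X'" "insert y Y'"]
      by (auto intro: prods_add_product)
    ultimately show ?case
      using add_product.hyps(1,2) by (intro exI[of _ "insert x X'"] exI[of _ "insert y Y'"]) auto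
  qed
  then show ?thesis using that by blast
qed

lemma prods_finite_right_sum:
  assumes "additive_subgroup R" "finite F"
  shows "p \<in> prods R F \<Longrightarrow> \<exists>r. (\<forall>x\<in>F. r x \<in> R) \<and> p = (\<Sum>x\<in>F. r x * x)"
proof (induction p rule: prods_induct)
  case zero
  then show ?case
    using additive_subgroup_zero[OF assms(1)] by (intro exI[of _ "\<lambda>_. 0"]) simp
next
  case (add_product c x q)
  then obtain r where r: "\<forall>z\<in>F. r z \<in> R" "q = (\<Sum>z\<in>F. r z * z)"
    by blast
  define r' where "r' z = r z + (if z = x then c else 0)" for z
  have "(\<Sum>z\<in>F. r' z * z) = (\<Sum>z\<in>F. r z * z + (if z = x then c * x else 0))"
    by (rule sum.cong) (auto simp: r'_def distrib_right)
  also have "\<dots> = c * x + q"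
    using add_product.hyps(2) assms(2) r(2) by (simp add: sum.distrib add.commute)
  finally show ?case
    using r(1) add_product.hyps(1) additive_subgroup_add[OF assms(1)] additive_subgroup_zero[OF assms(1)]
    by (intro exI[of _ r']) (auto simp: r'_def)
qed

text \<open>Induction step: \<open>a\<^sub>1 + a\<^sub>2 - a\<^sub>2a\<^sub>1\<close> is a common unit, where \<open>a\<^sub>2\<close> is a local unit
of \<open>m - a\<^sub>1m\<close>.\<close>

lemma common_left_unit:
  fixes A M :: "'a::ring_1 set"
  assumes A: "additive_subgroup A" and M: "additive_subgroup M"
    and A_mult: "\<And>a b. a \<in> A \<Longrightarrow> b \<in> A \<Longrightarrow> a * b \<in> A"
    and AM: "\<And>a m. a \<in> A \<Longrightarrow> m \<in> M \<Longrightarrow> a * m \<in> M"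
    and local_unit: "\<And>m. m \<in> M \<Longrightarrow> \<exists>a\<in>A. a * m = m"
  shows "finite F \<Longrightarrow> F \<subseteq> M \<Longrightarrow> \<exists>a\<in>A. \<forall>m\<in>F. a * m = m"
proof (induction F rule: finite_induct)
  case empty
  then show ?case using additive_subgroup_zero[OF A] by blast
next
  case (insert m F)
  then obtain a\<^sub>1 where a\<^sub>1: "a\<^sub>1 \<in> A" "\<forall>z\<in>F. a\<^sub>1 * z = z" by auto
  have "m - a\<^sub>1 * m \<in> M"
    using insert.prems a\<^sub>1(1) by (auto intro: additive_subgroup_diff[OF M] AM)
  then obtain a\<^sub>2 where a\<^sub>2: "a\<^sub>2 \<in> A" "a\<^sub>2 * (m - a\<^sub>1 * m) = m - a\<^sub>1 * m"
    using local_unit by blast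
  define a where "a = a\<^sub>1 + a\<^sub>2 - a\<^sub>2 * a\<^sub>1"
  have "a \<in> A"
    unfolding a_def using a\<^sub>1(1) a\<^sub>2(1)
    by (intro additive_subgroup_diff[OF A] additive_subgroup_add[OF A] A_mult)
  have a_mult: "a * z = a\<^sub>1 * z + a\<^sub>2 * (z - a\<^sub>1 * z)" for z
    unfolding a_def by (simp add: algebra_simps)
  have "a * m = m"
    using a_mult[of m] a\<^sub>2(2) by simp
  moreover have "a * z = z" if "z \<in> F" for z
    using a_mult[of z] a\<^sub>1(2) that by simp
  ultimately show ?case
    using \<open>a \<in> A\<close> by blast
qed

lemma common_right_unit:
  fixes B M :: "'a::ring_1 set"
  assumes B: "additive_subgroup B" and M: "additive_subgroup M"
    and B_mult: "\<And>a b. a \<in> B \<Longrightarrow> b \<in> B \<Longrightarrow> a * b \<in> B"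
    and MB: "\<And>b m. b \<in> B \<Longrightarrow> m \<in> M \<Longrightarrow> m * b \<in> M"
    and local_unit: "\<And>m. m \<in> M \<Longrightarrow> \<exists>b\<in>B. m * b = m"
  shows "finite F \<Longrightarrow> F \<subseteq> M \<Longrightarrow> \<exists>b\<in>B. \<forall>m\<in>F. m * b = m"
proof (induction F rule: finite_induct)
  case empty
  then show ?case using additive_subgroup_zero[OF B] by blast
next
  case (insert m F)
  then obtain b\<^sub>1 where b\<^sub>1: "b\<^sub>1 \<in> B" "\<forall>z\<in>F. z * b\<^sub>1 = z" by auto
  have "m - m * b\<^sub>1 \<in> M"
    using insert.prems b\<^sub>1(1) by (auto intro: additive_subgroup_diff[OF M] MB)
  then obtain b\<^sub>2 where b\<^sub>2: "b\<^sub>2 \<in> B" "(m - m * b\<^sub>1) * b\<^sub>2 = m - m * b\<^sub>1"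
    using local_unit by blast
  define b where "b = b\<^sub>1 + b\<^sub>2 - b\<^sub>1 * b\<^sub>2"
  have "b \<in> B"
    unfolding b_def using b\<^sub>1(1) b\<^sub>2(1)
    by (intro additive_subgroup_diff[OF B] additive_subgroup_add[OF B] B_mult)
  have mult_b: "z * b = z * b\<^sub>1 + (z - z * b\<^sub>1) * b\<^sub>2" for z
    unfolding b_def by (simp add: algebra_simps)
  have "m * b = m"
    using mult_b[of m] b\<^sub>2(2) by simp
  moreover have "z * b = z" if "z \<in> F" for z
    using mult_b[of z] b\<^sub>1(2) that by simp
  ultimately show ?case
    using \<open>b \<in> B\<close> by blast
qed

lemma fin_gen_left_module_right_unit:
  fixes B M :: "'a::ring_1 set"
  assumes "fin_gen_left_module R M"
    and "additive_subgroup B" "additive_subgroup M"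
    and "\<And>a b. a \<in> B \<Longrightarrow> b \<in> B \<Longrightarrow> a * b \<in> B"
    and "\<And>b m. b \<in> B \<Longrightarrow> m \<in> M \<Longrightarrow> m * b \<in> M"
    and "\<And>m. m \<in> M \<Longrightarrow> \<exists>b\<in>B. m * b = m"
  shows "\<exists>b\<in>B. \<forall>m\<in>M. m * b = m"
proof -
  obtain F where F: "finite F" "F \<subseteq> M"
    and gen: "\<forall>m\<in>M. \<exists>r. (\<forall>x\<in>F. r x \<in> R) \<and> m = (\<Sum>x\<in>F. r x * x)"
    using assms(1) unfolding fin_gen_left_module_def by (elim exE conjE)
  obtain b where b: "b \<in> B" "\<forall>x\<in>F. x * b = x"
    using common_right_unit[OF assms(2-6) F] by blast
  have "m * b = m" if "m \<in> M" for m
  proof -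
    obtain r where m: "m = (\<Sum>x\<in>F. r x * x)"
      using bspec[OF gen \<open>m \<in> M\<close>] by (elim exE conjE)
    have "(\<Sum>x\<in>F. r x * x) * b = (\<Sum>x\<in>F. r x * (x * b))"
      by (simp add: sum_distrib_right mult.assoc)
    then show ?thesis
      using m b(2) by simp
  qed
  then show ?thesis using b(1) by blast
qed

lemma fin_gen_left_module_if_right_unit:
  assumes R: "additive_subgroup R"
    and e: "e \<in> prods X M" "\<And>m. m \<in> M \<Longrightarrow> m * e = m"
    and XR: "\<And>m x. m \<in> M \<Longrightarrow> x \<in> X \<Longrightarrow> m * x \<in> R"
  shows "fin_gen_left_module R M"
proof -
  obtain X' F where F: "finite X'" "X' \<subseteq> X" "finite F" "F \<subseteq> M" "e \<in> prods X' F"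
    using prods_finite_support[OF e(1)] .
  have "\<exists>r. (\<forall>x\<in>F. r x \<in> R) \<and> m = (\<Sum>x\<in>F. r x * x)" if m: "m \<in> M" for m
  proof -
    have "m * e \<in> prods R F"
      using prods_mult_left[OF _ F(5), of m R] F(2) XR[OF m] by blast
    then show ?thesis
      using prods_finite_right_sum[OF R F(3)] e(2)[OF m] by simp
  qed
  then show ?thesis
    unfolding fin_gen_left_module_def using F(3,4) by blast
qed

context
  fixes Sg :: "'g::group_add \<Rightarrow> 'a::ring_1 set"
  assumes graded: "group_graded Sg"
begin

lemma component_additive_subgroup: "additive_subgroup (Sg g)"
  using graded by (simp add: group_graded_def)

lemma component_mult: "x \<in> Sg g \<Longrightarrow> y \<in> Sg h \<Longrightarrow> x * y \<in> Sg (g + h)"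
  using graded by (simp add: group_graded_def)

lemma prods_component_subset: "p \<in> prods (Sg g) (Sg h) \<Longrightarrow> p \<in> Sg (g + h)"
proof (induction p rule: prods_induct)
  case zero
  show ?case by (rule additive_subgroup_zero[OF component_additive_subgroup])
next
  case (add_product x y q)
  then show ?case
    by (intro additive_subgroup_add[OF component_additive_subgroup] component_mult)
qed

lemma prods_component_mult:
  "a \<in> prods (Sg g) (Sg h) \<Longrightarrow> b \<in> prods (Sg k) (Sg l) \<Longrightarrow> a * b \<in> prods (Sg (g + h + k)) (Sg l)"
  by (auto intro: prods_mult_left component_mult prods_component_subset)

lemma prods_component_additive_subgroup: "additive_subgroup (prods (Sg g) (Sg h))"
  by (intro prods_additive_subgroup component_additive_subgroup)

lemma left_local_units:
  "nearly_epsilon_strongly_graded Sg \<Longrightarrow> s \<in> Sg g \<Longrightarrow> \<exists>a\<in>prods (Sg g) (Sg (- g)). a * s = s"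
  unfolding nearly_epsilon_strongly_graded_def by blast

lemma right_local_units:
  "nearly_epsilon_strongly_graded Sg \<Longrightarrow> s \<in> Sg g \<Longrightarrow> \<exists>b\<in>prods (Sg (- g)) (Sg g). s * b = s"
  unfolding nearly_epsilon_strongly_graded_def by blast

lemma component_right_unit:
  assumes "nearly_epsilon_strongly_graded Sg" "fin_gen_left_module (Sg 0) (Sg g)"
  shows "\<exists>e\<in>prods (Sg (- g)) (Sg g). \<forall>s\<in>Sg g. s * e = s"
proof (rule fin_gen_left_module_right_unit[OF assms(2)
      prods_component_additive_subgroup component_additive_subgroup])
  show "a * b \<in> prods (Sg (- g)) (Sg g)"
    if "a \<in> prods (Sg (- g)) (Sg g)" "b \<in> prods (Sg (- g)) (Sg g)" for a b
    using prods_component_mult[OF that] by simp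
  show "s * b \<in> Sg g" if "b \<in> prods (Sg (- g)) (Sg g)" "s \<in> Sg g" for b s
    using component_mult[OF that(2) prods_component_subset[OF that(1)]] by simp
  show "\<exists>b\<in>prods (Sg (- g)) (Sg g). s * b = s" if "s \<in> Sg g" for s
    by (rule right_local_units[OF assms(1) that])
qed

lemma left_unit_if_right_unit:
  assumes ne: "nearly_epsilon_strongly_graded Sg"
    and e: "e \<in> prods (Sg g) (Sg (- g))" "\<And>t. t \<in> Sg (- g) \<Longrightarrow> t * e = t"
    and s: "s \<in> Sg g"
  shows "e * s = s"
proof -
  obtain X' Y' where X': "finite X'" "X' \<subseteq> Sg g" "finite Y'" "Y' \<subseteq> Sg (- g)" "e \<in> prods X' Y'"
    by (rule prods_finite_support[OF e(1)])
  have "\<exists>a\<in>prods (Sg g) (Sg (- g)). \<forall>m\<in>insert s X'. a * m = m"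
  proof (rule common_left_unit[OF prods_component_additive_subgroup component_additive_subgroup])
    show "a * b \<in> prods (Sg g) (Sg (- g))"
      if "a \<in> prods (Sg g) (Sg (- g))" "b \<in> prods (Sg g) (Sg (- g))" for a b
      using prods_component_mult[OF that] by simp
    show "a * m \<in> Sg g" if "a \<in> prods (Sg g) (Sg (- g))" "m \<in> Sg g" for a m
      using component_mult[OF prods_component_subset[OF that(1)] that(2)] by simp
    show "\<exists>a\<in>prods (Sg g) (Sg (- g)). a * m = m" if "m \<in> Sg g" for m
      by (rule left_local_units[OF ne that])
    show "finite (insert s X')" "insert s X' \<subseteq> Sg g"
      using X'(1,2) s by auto
  qed
  then obtain a where a: "a \<in> prods (Sg g) (Sg (- g))" "\<forall>m\<in>insert s X'. a * m = m"
    by (elim bexE)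
  have "a = e"
    using a(2) by (intro prods_eq_if_units[OF a(1) X'(5) e(2)]) auto
  then show ?thesis
    using a(2) by simp
qed

lemma component_epsilon_unit:
  assumes "nearly_epsilon_strongly_graded Sg" "fin_gen_left_module (Sg 0) (Sg (- g))"
  shows "\<exists>e\<in>prods (Sg g) (Sg (- g)).
           (\<forall>x\<in>prods (Sg g) (Sg (- g)). e * x = x \<and> x * e = x) \<and>
           (\<forall>s\<in>Sg g. e * s = s) \<and> (\<forall>t\<in>Sg (- g). t * e = t)"
proof -
  obtain e where e: "e \<in> prods (Sg g) (Sg (- g))" "\<forall>t\<in>Sg (- g). t * e = t"
    using component_right_unit[OF assms] by auto
  have "\<forall>s\<in>Sg g. e * s = s"
    using left_unit_if_right_unit[OF assms(1) e(1)] e(2) by blast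
  then show ?thesis
    using e prods_left_unit[of "Sg g" e] prods_right_unit[of "Sg (- g)" e] by blast
qed

lemma epsilon_strongly_graded_if_fin_gen:
  assumes "nearly_epsilon_strongly_graded Sg" "\<forall>g. fin_gen_left_module (Sg 0) (Sg g)"
  shows "epsilon_strongly_graded Sg"
  unfolding epsilon_strongly_graded_def
proof
  fix g
  show "(\<exists>e\<in>prods (Sg g) (Sg (- g)).
          (\<forall>x\<in>prods (Sg g) (Sg (- g)). e * x = x \<and> x * e = x) \<and> (\<forall>s\<in>Sg g. e * s = s))
      \<and> (\<exists>e\<in>prods (Sg (- g)) (Sg g).
          (\<forall>x\<in>prods (Sg (- g)) (Sg g). e * x = x \<and> x * e = x) \<and> (\<forall>s\<in>Sg g. s * e = s))"
    using component_epsilon_unit[OF assms(1), of g] component_epsilon_unit[OF assms(1), of "- g"]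
      assms(2)
    by (simp add: Bex_def) blast
qed

lemma fin_gen_if_epsilon_strongly_graded:
  assumes "epsilon_strongly_graded Sg"
  shows "fin_gen_left_module (Sg 0) (Sg g)"
proof -
  obtain e where "e \<in> prods (Sg (- g)) (Sg g)" "\<forall>s\<in>Sg g. s * e = s"
    using assms unfolding epsilon_strongly_graded_def by blast
  then show ?thesis
    using component_mult[of _ g _ "- g"]
    by (intro fin_gen_left_module_if_right_unit component_additive_subgroup) auto
qed

lemma nearly_epsilon_strongly_graded_if_epsilon:
  "epsilon_strongly_graded Sg \<Longrightarrow> nearly_epsilon_strongly_graded Sg"
  unfolding epsilon_strongly_graded_def nearly_epsilon_strongly_graded_def by blast

end

theorem mainTheorem5:
  fixes Sg :: "'g::group_add \<Rightarrow> 'a::ring_1 set"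
  assumes "group_graded Sg"
  shows "epsilon_strongly_graded Sg \<longleftrightarrow>
           (nearly_epsilon_strongly_graded Sg \<and> (\<forall>g. fin_gen_left_module (Sg 0) (Sg g)))"
  using nearly_epsilon_strongly_graded_if_epsilon[OF assms] fin_gen_if_epsilon_strongly_graded[OF assms]
    epsilon_strongly_graded_if_fin_gen[OF assms] by blast

end
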